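(* Let $(\Omega,\mathcal F)$ be a measurable space with $\Sigma\neq\emptyset$ (where $\Sigma$ is defined in the context). Let $v:\mathcal F\to\mathbb R$ be a non-decreasing and continuous set function with $v(\emptyset)=0$. Then the following four conditions are equivalent. (a) $v$ is submodular, i.e. $v(A)+v(B)\ge v(A\cup B)+v(A\cap B)$ for all $A,B\in\mathcal F$. (b) For every $\mathcal I\in\Sigma$, the extremal measure $\mu_{v,\mathcal I}$ belongs to $\mathcal C_{-,v}(\Omega)$. (c) $v(A)=\sup_{\mathcal I\in\Sigma}\mu_{v,\mathcal I}(A)$ for all $A\in\mathcal F$. (d) For all $A,B\in\mathcal F$ with $B\subset A$, $v(B)=\sup_{\mu\in\mathcal C_{-,v}(A)}\mu(B)$.
   Context: Let $(\Omega,\mathcal F)$ be a measurable space. $\Sigma$ denotes the set of all classes $\mathcal I\subset\mathcal F$ that are chains (totally ordered by inclusion), contain $\emptyset$ and $\Omega$, and satisfy $\sigma[\mathcal I]=\mathcal F$ (the smallest $\sigma$-algebra containing $\mathcal I$ is $\mathcal F$). A set function $v:\mathcal F\to\mathbb R$ is non-decreasing if $v(A)\le v(B)$ whenever $A\subset B$. For $\mathcal I\in\Sigma$, let $\mathcal J$ be the algebra generated by $\mathcal I$; its elements are exactly the sets $\bigcup_{i=1}^n (C_i\cap D_i^c)$ with $C_1\supset D_1\supset C_2\supset\cdots\supset C_n\supset D_n$, $C_i,D_i\in\mathcal I$. For non-decreasing $v$ define the finitely additive set function $\mu_{v,\mathcal I}$ on $\mathcal J$ by $\mu_{v,\mathcal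 I}(\bigcup_{i=1}^n (C_i\cap D_i^c))=\sum_{i=1}^n (v(C_i)-v(D_i))$ (the unique finitely additive extension of $\mu_{v,\mathcal I}(I)=v(I)$, $I\in\mathcal I$). A non-decreasing $v$ is called continuous if for every $\mathcal I\in\Sigma$ this $\mu_{v,\mathcal I}$ is $\sigma$-additive on $\mathcal J$; then it extends uniquely to a measure on $\mathcal F$, again denoted $\mu_{v,\mathcal I}$ and called the extremal measure of $v$ corresponding to $\mathcal I$. For $A\in\mathcal F$, $\mathcal M(A)$ is the set of finite measures on $(A,\mathcal F|_A)$, and $\mathcal C_{-,v}(A)=\{\mu\in\mathcal M(A)\mid \mu(A)=v(A),\ \mu(B)\le v(B)\text{ for all }B\in\mathcal F,\ B\subset A\}$. *)

theory Defs
  imports "HOL-Analysis.Analysis"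
begin

definition Sigma_chains :: "'a measure \<Rightarrow> 'a set set set" where
  "Sigma_chains M = {I. I \<subseteq> sets M \<and>
     (\<forall>C\<in>I. \<forall>D\<in>I. C \<subseteq> D \<or> D \<subseteq> C) \<and>
     {} \<in> I \<and> space M \<in> I \<and> sigma_sets (space M) I = sets M}"

definition nondecreasing_sf :: "'a measure \<Rightarrow> ('a set \<Rightarrow> real) \<Rightarrow> bool" where
  "nondecreasing_sf M v \<longleftrightarrow> (\<forall>A\<in>sets M. \<forall>B\<in>sets M. A \<subseteq> B \<longrightarrow> v A \<le> v B)"

definition submodular_sf :: "'a measure \<Rightarrow> ('a set \<Rightarrow> real) \<Rightarrow> bool" where
  "submodular_sf M v \<longleftrightarrow>
     (\<forall>A\<in>sets M. \<forall>B\<in>sets M. v A + v B \<ge> v (A \<union> B) + v (A \<inter> B))"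

definition chain_rep :: "'a set set \<Rightarrow> nat \<Rightarrow> (nat \<Rightarrow> 'a set) \<Rightarrow> (nat \<Rightarrow> 'a set) \<Rightarrow> bool" where
  "chain_rep I n C D \<longleftrightarrow> (\<forall>i<n. C i \<in> I \<and> D i \<in> I \<and> D i \<subseteq> C i \<and>
                                (Suc i < n \<longrightarrow> C (Suc i) \<subseteq> D i))"

definition chain_algebra :: "'a set set \<Rightarrow> 'a set set" where
  "chain_algebra I = {(\<Union>i<n. C i \<inter> - D i) | n C D. chain_rep I n C D}"

definition mu_J :: "('a set \<Rightarrow> real) \<Rightarrow> 'a set set \<Rightarrow> 'a set \<Rightarrow> real" where
  "mu_J v I A = (SOME s. \<exists>n C D. chain_rep I n C D \<and> A = (\<Union>i<n. C i \<inter> - D i)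
                              \<and> s = (\<Sum>i<n. v (C i) - v (D i)))"

definition continuous_sf :: "'a measure \<Rightarrow> ('a set \<Rightarrow> real) \<Rightarrow> bool" where
  "continuous_sf M v \<longleftrightarrow>
     (\<forall>I\<in>Sigma_chains M. countably_additive (chain_algebra I) (\<lambda>A. ennreal (mu_J v I A)))"

definition extremal_measure :: "'a measure \<Rightarrow> ('a set \<Rightarrow> real) \<Rightarrow> 'a set set \<Rightarrow> 'a measure" where
  "extremal_measure M v I = (THE N. sets N = sets M \<and>
      (\<forall>A\<in>chain_algebra I. emeasure N A = ennreal (mu_J v I A)))"

text \<open>C_{-,v}(A): finite measures on (A, F|_A) dominated by v with total mass v(A).\<close>
definition lower_core :: "'a measure \<Rightarrow> ('a set \<Rightarrow> real) \<Rightarrow> 'a set \<Rightarrow> 'a measure set" where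
  "lower_core M v A = {N. finite_measure N \<and> sets N = sets (restrict_space M A) \<and>
      measure N A = v A \<and> (\<forall>B\<in>sets M. B \<subseteq> A \<longrightarrow> measure N B \<le> v B)}"

end

(*
  For a chain I the extremal measure mu_{v,I} agrees with v on I. If v is submodular, then
  mu_{v,I} <= v: on a finite disjoint union of intervals of I one peels off the topmost interval
  c - d, the rest R lying below d, and uses v c - v d + v R <= v ((c - d) \<union> R); the bound then
  spreads to all measurable sets by the monotone class theorem, closure under decreasing
  intersections coming from the continuity of v, which is read off along a chain passing
  through the given decreasing sequence.
  Conversely, every nested pair of measurable sets lies on some chain, whose extremal measure
  attains v on both sets; by modularity of measures, upper bounds mu <= v with equality on
  A \<union> B and A \<inter> B force v (A \<union> B) + v (A \<inter> B) <= v A + v B.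
*)

theory Submission
  imports Defs
begin

lemma Sigma_chainsD:
  assumes "I \<in> Sigma_chains M"
  shows "I \<subseteq> sets M" "chain\<^sub>\<subseteq> I" "{} \<in> I" "space M \<in> I" "sigma_sets (space M) I = sets M"
  using assms unfolding Sigma_chains_def chain_subset_def by auto

lemma chain_subset_Int: "chain\<^sub>\<subseteq> I \<Longrightarrow> A \<in> I \<Longrightarrow> B \<in> I \<Longrightarrow> A \<inter> B \<in> I"
  unfolding chain_subset_def by (metis Int_absorb1 Int_absorb2)

lemma chain_subset_Un: "chain\<^sub>\<subseteq> I \<Longrightarrow> A \<in> I \<Longrightarrow> B \<in> I \<Longrightarrow> A \<union> B \<in> I"
  unfolding chain_subset_def by (metis Un_absorb1 Un_absorb2)

lemma chain_subset_mono: "chain\<^sub>\<subseteq> I \<Longrightarrow> J \<subseteq> I \<Longrightarrow> chain\<^sub>\<subseteq> J"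
  unfolding chain_subset_def by blast

lemma chain_rep_nested:
  assumes "chain_rep I n C D" "i < j" "j < n"
  shows "C j \<subseteq> D i"
  using assms(2,3)
proof (induction i j rule: less_Suc_induct)
  case (1 i)
  then show ?case using assms(1) unfolding chain_rep_def by simp
next
  case (2 i j k)
  then have "C k \<subseteq> D j" "D j \<subseteq> C j" "C j \<subseteq> D i"
    using assms(1) unfolding chain_rep_def by auto
  then show ?case by blast
qed

lemma chain_interval_split:
  assumes "chain\<^sub>\<subseteq> {c, d, C, D}" "d \<subseteq> c" "D \<subseteq> C" "C \<inter> - D \<noteq> {}" "X \<inter> C = {}"
    and "X \<union> (C \<inter> - D) = c \<inter> - d"
  shows "D = d" "C \<subseteq> c" "X = c \<inter> - C"
proof -
  have cmp: "C \<subseteq> c \<or> c \<subseteq> C" "C \<subseteq> d \<or> d \<subseteq> C" "D \<subseteq> c \<or> c \<subseteq> D"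
    using assms(1) unfolding chain_subset_def by auto
  have block: "C \<inter> - D \<subseteq> c \<inter> - d" using assms(6) by blast
  show "C \<subseteq> c"
  proof (rule ccontr)
    assume "\<not> C \<subseteq> c"
    then have "\<not> D \<subseteq> c" using block by blast
    then show False using cmp(3) block assms(4) by blast
  qed
  have "d \<subseteq> C" using cmp(2) block assms(4) by blast
  then show "D = d" using assms(2,3,5,6) \<open>C \<subseteq> c\<close> by blast
  then show "X = c \<inter> - C" using assms(5,6) \<open>d \<subseteq> C\<close> by blast
qed

lemma chain_rep_Suc: "chain_rep I (Suc n) C D \<Longrightarrow> chain_rep I n C D"
  unfolding chain_rep_def by auto

(* Every representation of an interval telescopes to the same value; this is what makes mu_J,
   which picks a representation by choice, well defined on intervals. *)
lemma chain_rep_sum_interval: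
  fixes v :: "'a set \<Rightarrow> real"
  assumes "chain\<^sub>\<subseteq> I" "chain_rep I n C D" "c \<in> I" "d \<in> I" "d \<subseteq> c"
    and "(\<Union>i<n. C i \<inter> - D i) = c \<inter> - d"
  shows "(\<Sum>i<n. v (C i) - v (D i)) = v c - v d"
  using assms(2-6)
proof (induction n arbitrary: c d)
  case 0
  then have "c = d" by blast
  then show ?case by simp
next
  case (Suc n)
  have CD: "C n \<in> I" "D n \<in> I" "D n \<subseteq> C n"
    using Suc.prems(1) unfolding chain_rep_def by auto
  have split: "(\<Union>i<n. C i \<inter> - D i) \<union> (C n \<inter> - D n) = c \<inter> - d"
    using Suc.prems(5) by (simp add: lessThan_Suc Un_commute)
  show ?case
  proof (cases "C n \<inter> - D n = {}")
    case True
    then have "C n = D n" using CD(3) by blast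
    then show ?thesis using Suc.IH[OF chain_rep_Suc[OF Suc.prems(1)] Suc.prems(2-4)] split True
      by simp
  next
    case False
    have "(\<Union>i<n. C i \<inter> - D i) \<inter> C n = {}"
      using chain_rep_nested[OF Suc.prems(1), of _ n] by auto
    moreover have "chain\<^sub>\<subseteq> {c, d, C n, D n}"
      using CD Suc.prems(2,3) by (intro chain_subset_mono[OF assms(1)]) simp
    ultimately have "D n = d" "C n \<subseteq> c" "(\<Union>i<n. C i \<inter> - D i) = c \<inter> - C n"
      using chain_interval_split[OF _ Suc.prems(4) CD(3) False _ split] by auto
    then show ?thesis
      using Suc.IH[OF chain_rep_Suc[OF Suc.prems(1)] Suc.prems(2) CD(1)] by simp
  qed
qed

lemma mu_J_interval:
  fixes v :: "'a set \<Rightarrow> real"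
  assumes "chain\<^sub>\<subseteq> I" "c \<in> I" "d \<in> I" "d \<subseteq> c"
  shows "mu_J v I (c \<inter> - d) = v c - v d"
proof -
  let ?rep = "\<lambda>s. \<exists>n C D. chain_rep I n C D \<and> c \<inter> - d = (\<Union>i<n. C i \<inter> - D i)
                              \<and> s = (\<Sum>i<n. v (C i) - v (D i))"
  have "?rep (v c - v d)"
    by (rule exI[of _ 1], rule exI[of _ "\<lambda>_. c"], rule exI[of _ "\<lambda>_. d"])
       (use assms in \<open>auto simp: chain_rep_def\<close>)
  then have "?rep (mu_J v I (c \<inter> - d))"
    unfolding mu_J_def by (rule someI)
  then show ?thesis
    using chain_rep_sum_interval[OF assms(1) _ assms(2-4)] by metis
qed

lemma chain_algebraE:
  fixes v :: "'a set \<Rightarrow> real"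
  assumes "A \<in> chain_algebra I"
  obtains n C D where "chain_rep I n C D" "A = (\<Union>i<n. C i \<inter> - D i)"
    "mu_J v I A = (\<Sum>i<n. v (C i) - v (D i))"
proof -
  let ?rep = "\<lambda>s. \<exists>n C D. chain_rep I n C D \<and> A = (\<Union>i<n. C i \<inter> - D i)
                              \<and> s = (\<Sum>i<n. v (C i) - v (D i))"
  have "\<exists>s. ?rep s"
    using assms unfolding chain_algebra_def by blast
  then have "?rep (mu_J v I A)"
    unfolding mu_J_def by (rule someI_ex)
  then show ?thesis
    using that by blast
qed

lemma chain_algebraI: "chain_rep I n C D \<Longrightarrow> (\<Union>i<n. C i \<inter> - D i) \<in> chain_algebra I"
  unfolding chain_algebra_def by blast

definition chain_intervals :: "'a set set \<Rightarrow> 'a set set" where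
  "chain_intervals I = {C - D | C D. C \<in> I \<and> D \<in> I}"

lemma chain_intervals_cases:
  assumes "chain\<^sub>\<subseteq> I" "X \<in> chain_intervals I"
  obtains C D where "C \<in> I" "D \<in> I" "D \<subseteq> C" "X = C \<inter> - D"
proof -
  obtain C D where "X = C - D" "C \<in> I" "D \<in> I"
    using assms(2) unfolding chain_intervals_def by blast
  moreover have "C \<inter> D \<in> I"
    using assms(1) calculation(2,3) by (rule chain_subset_Int)
  ultimately show ?thesis
    using that[of C "C \<inter> D"] by blast
qed

lemma semiring_of_sets_chain_intervals:
  assumes "chain\<^sub>\<subseteq> I" "I \<subseteq> Pow \<Omega>" "{} \<in> I"
  shows "semiring_of_sets \<Omega> (chain_intervals I)"
proof
  show "chain_intervals I \<subseteq> Pow \<Omega>" "{} \<in> chain_intervals I"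
    using assms(2,3) unfolding chain_intervals_def by blast+
next
  fix a b assume "a \<in> chain_intervals I" "b \<in> chain_intervals I"
  then obtain A1 B1 A2 B2 where ab: "a = A1 - B1" "b = A2 - B2" "A1 \<in> I" "B1 \<in> I" "A2 \<in> I" "B2 \<in> I"
    unfolding chain_intervals_def by blast
  have "A1 \<inter> A2 \<in> I" "B1 \<union> B2 \<in> I" "B1 \<union> A2 \<in> I" "A1 \<inter> (A2 \<inter> B2) \<in> I"
    using ab assms(1) by (auto intro: chain_subset_Int chain_subset_Un)
  moreover have "a \<inter> b = (A1 \<inter> A2) - (B1 \<union> B2)" using ab by blast
  ultimately show "a \<inter> b \<in> chain_intervals I" unfolding chain_intervals_def by blast
  let ?C = "{A1 - (B1 \<union> A2), (A1 \<inter> (A2 \<inter> B2)) - B1}"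
  have "?C \<subseteq> chain_intervals I"
    using ab(3,4) \<open>B1 \<union> A2 \<in> I\<close> \<open>A1 \<inter> (A2 \<inter> B2) \<in> I\<close>
    unfolding chain_intervals_def by blast
  moreover have "a - b = \<Union>?C" using ab(1,2) by blast
  moreover have "disjoint ?C" unfolding disjoint_def by blast
  ultimately show "\<exists>C\<subseteq>chain_intervals I. finite C \<and> disjoint C \<and> a - b = \<Union> C" by blast
qed

lemma semiring_of_sets_Sigma_chain:
  assumes "I \<in> Sigma_chains M"
  shows "semiring_of_sets (space M) (chain_intervals I)"
proof (rule semiring_of_sets_chain_intervals)
  show "I \<subseteq> Pow (space M)"
    using Sigma_chainsD(1)[OF assms] sets.sets_into_space by blast
qed (use Sigma_chainsD[OF assms] in auto)

lemma subset_chain_intervals: "{} \<in> I \<Longrightarrow> I \<subseteq> chain_intervals I"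
  unfolding chain_intervals_def by force

lemma chain_intervals_subset_chain_algebra:
  assumes "chain\<^sub>\<subseteq> I"
  shows "chain_intervals I \<subseteq> chain_algebra I"
proof
  fix X assume "X \<in> chain_intervals I"
  then obtain C D where "C \<in> I" "D \<in> I" "D \<subseteq> C" "X = C \<inter> - D"
    by (rule chain_intervals_cases[OF assms])
  then have "chain_rep I 1 (\<lambda>_. C) (\<lambda>_. D)" "X = (\<Union>i<1::nat. C \<inter> - D)"
    unfolding chain_rep_def by (simp_all add: lessThan_Suc)
  then show "X \<in> chain_algebra I"
    using chain_algebraI[of I 1 "\<lambda>_. C" "\<lambda>_. D"] by simp
qed

lemma Sigma_chains_subset_chain_algebra: "I \<in> Sigma_chains M \<Longrightarrow> I \<subseteq> chain_algebra I"
  using subset_chain_intervals[OF Sigma_chainsD(3)]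
    chain_intervals_subset_chain_algebra[OF Sigma_chainsD(2)]
  by (rule order_trans)

lemma chain_intervals_subset_sets: "I \<subseteq> sets M \<Longrightarrow> chain_intervals I \<subseteq> sets M"
  unfolding chain_intervals_def by blast

lemma sigma_sets_chain_intervals:
  assumes "I \<in> Sigma_chains M"
  shows "sigma_sets (space M) (chain_intervals I) = sets M"
proof
  note I = Sigma_chainsD[OF assms]
  show "sigma_sets (space M) (chain_intervals I) \<subseteq> sets M"
    by (rule sets.sigma_sets_subset[OF chain_intervals_subset_sets[OF I(1)]])
  show "sets M \<subseteq> sigma_sets (space M) (chain_intervals I)"
    using sigma_sets_mono'[OF subset_chain_intervals[OF I(3)], of "space M"] I(5) by simp
qed

lemma emeasure_chain_algebra:
  fixes v :: "'a set \<Rightarrow> real"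
  assumes "chain\<^sub>\<subseteq> I" "I \<subseteq> sets N"
    and mono: "\<And>C D. C \<in> I \<Longrightarrow> D \<in> I \<Longrightarrow> D \<subseteq> C \<Longrightarrow> v D \<le> v C"
    and intervals: "\<And>C D. C \<in> I \<Longrightarrow> D \<in> I \<Longrightarrow> D \<subseteq> C \<Longrightarrow> emeasure N (C \<inter> - D) = ennreal (v C - v D)"
    and "A \<in> chain_algebra I"
  shows "emeasure N A = ennreal (mu_J v I A)"
proof -
  obtain n C D where rep: "chain_rep I n C D" "A = (\<Union>i<n. C i \<inter> - D i)"
    "mu_J v I A = (\<Sum>i<n. v (C i) - v (D i))"
    using assms(5) by (rule chain_algebraE)
  have CD: "C i \<in> I" "D i \<in> I" "D i \<subseteq> C i" if "i < n" for i
    using rep(1) that unfolding chain_rep_def by auto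
  have "disjoint_family_on (\<lambda>i. C i \<inter> - D i) {..<n}"
    unfolding disjoint_family_on_def
  proof (intro ballI impI)
    fix i j assume "i \<in> {..<n}" "j \<in> {..<n}" "i \<noteq> j"
    then show "C i \<inter> - D i \<inter> (C j \<inter> - D j) = {}"
      using chain_rep_nested[OF rep(1), of i j] chain_rep_nested[OF rep(1), of j i]
      by (cases "i < j") auto
  qed
  moreover have "(\<lambda>i. C i \<inter> - D i) ` {..<n} \<subseteq> sets N"
    using CD assms(2) by (auto simp: Diff_eq[symmetric] intro!: sets.Diff)
  ultimately have "emeasure N A = (\<Sum>i<n. emeasure N (C i \<inter> - D i))"
    using sum_emeasure[of "\<lambda>i. C i \<inter> - D i" "{..<n}" N] rep(2) by simp
  also have "\<dots> = (\<Sum>i<n. ennreal (v (C i) - v (D i)))"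
    using CD intervals by simp
  also have "\<dots> = ennreal (mu_J v I A)"
    using rep(3) CD mono by (subst sum_ennreal) auto
  finally show ?thesis .
qed

lemma measure_eqI_Sigma_chain:
  assumes "I \<in> Sigma_chains M" "sets N = sets M" "sets N' = sets M"
    and "\<And>C. C \<in> I \<Longrightarrow> emeasure N C = emeasure N' C" and "emeasure N (space M) \<noteq> \<infinity>"
  shows "N = N'"
proof (rule measure_eqI_generator_eq[where E = I and \<Omega> = "space M" and A = "\<lambda>_. space M"])
  note I = Sigma_chainsD[OF assms(1)]
  show "Int_stable I"
    unfolding Int_stable_def using chain_subset_Int[OF I(2)] by blast
  show "I \<subseteq> Pow (space M)"
    using I(1) sets.sets_into_space by blast
  show "sets N = sigma_sets (space M) I" "sets N' = sigma_sets (space M) I"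
    using assms(2,3) I(5) by auto
  show "range (\<lambda>_. space M) \<subseteq> I" "(\<Union>i::nat. space M) = space M"
    using I(4) by auto
  show "emeasure N (space M) \<noteq> \<infinity>" by (fact assms(5))
qed (use assms(4) in auto)

lemma Sigma_chainsI:
  assumes "I \<in> Sigma_chains M" "K \<subseteq> sets M" "chain\<^sub>\<subseteq> K" "{} \<in> K" "space M \<in> K"
    and "I \<subseteq> sigma_sets (space M) K"
  shows "K \<in> Sigma_chains M"
proof -
  have "sigma_sets (space M) K \<subseteq> sets M"
    by (rule sets.sigma_sets_subset[OF assms(2)])
  moreover have "sets M \<subseteq> sigma_sets (space M) K"
    using sigma_sets_mono[OF assms(6)] Sigma_chainsD(5)[OF assms(1)] by simp
  ultimately show ?thesis
    using assms(2-5) unfolding Sigma_chains_def chain_subset_def by blast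
qed

definition chain_through :: "'a set set \<Rightarrow> 'a set \<Rightarrow> 'a set set" where
  "chain_through I A = {C \<inter> A | C. C \<in> I} \<union> {A \<union> C | C. C \<in> I}"

lemma
  assumes "I \<in> Sigma_chains M" "A \<in> sets M"
  shows Sigma_chains_chain_through: "chain_through I A \<in> Sigma_chains M"
    and chain_through_self: "A \<in> chain_through I A"
    and chain_through_below: "C \<in> I \<Longrightarrow> C \<subseteq> A \<Longrightarrow> C \<in> chain_through I A"
proof -
  note I = Sigma_chainsD[OF assms(1)]
  have A: "A \<subseteq> space M" using assms(2) sets.sets_into_space by blast
  show "A \<in> chain_through I A"
    using I(4) A unfolding chain_through_def by blast
  show "C \<in> chain_through I A" if "C \<in> I" "C \<subseteq> A" for C
    using that unfolding chain_through_def by blast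
  have sets: "chain_through I A \<subseteq> sets M"
    using I(1) assms(2) unfolding chain_through_def by blast
  then interpret S: sigma_algebra "space M" "sigma_sets (space M) (chain_through I A)"
    by (intro sigma_algebra_sigma_sets) (auto dest: sets.sets_into_space)
  show "chain_through I A \<in> Sigma_chains M"
  proof (rule Sigma_chainsI[OF assms(1) sets])
    show "chain\<^sub>\<subseteq> (chain_through I A)"
      using I(2) unfolding chain_through_def chain_subset_def by blast
    show "{} \<in> chain_through I A" "space M \<in> chain_through I A"
      using I(3,4) A unfolding chain_through_def by blast+
    show "I \<subseteq> sigma_sets (space M) (chain_through I A)"
    proof
      fix C assume "C \<in> I"
      then have "C \<inter> A \<in> chain_through I A" "A \<union> C \<in> chain_through I A" "A \<in> chain_through I A"
        using \<open>A \<in> chain_through I A\<close> unfolding chain_through_def by blast+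
      then have "(C \<inter> A) \<union> ((A \<union> C) - A) \<in> sigma_sets (space M) (chain_through I A)"
        by (blast intro: sigma_sets.Basic)
      moreover have "(C \<inter> A) \<union> ((A \<union> C) - A) = C" by blast
      ultimately show "C \<in> sigma_sets (space M) (chain_through I A)" by simp
    qed
  qed
qed

lemma Sigma_chains_through_subsets:
  assumes "Sigma_chains M \<noteq> {}" "A \<in> sets M" "B \<in> sets M" "A \<subseteq> B"
  shows "\<exists>K\<in>Sigma_chains M. A \<in> K \<and> B \<in> K"
proof -
  obtain I where I: "I \<in> Sigma_chains M" using assms(1) by blast
  have IA: "chain_through I A \<in> Sigma_chains M"
    by (rule Sigma_chains_chain_through[OF I assms(2)])
  let ?K = "chain_through (chain_through I A) B"
  have "?K \<in> Sigma_chains M" "B \<in> ?K"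
    by (rule Sigma_chains_chain_through[OF IA assms(3)], rule chain_through_self[OF IA assms(3)])
  moreover have "A \<in> ?K"
    by (rule chain_through_below[OF IA assms(3) chain_through_self[OF I assms(2)] assms(4)])
  ultimately show ?thesis by blast
qed

definition chain_through_decseq :: "'a set set \<Rightarrow> (nat \<Rightarrow> 'a set) \<Rightarrow> 'a set set" where
  "chain_through_decseq I E =
     {(\<Inter>n. E n) \<inter> C | C. C \<in> I} \<union> {E (Suc n) \<union> (E n \<inter> C) | n C. C \<in> I}"

lemma chain_subset_chain_through_decseq:
  assumes "chain\<^sub>\<subseteq> I" "decseq E"
  shows "chain\<^sub>\<subseteq> (chain_through_decseq I E)"
  unfolding chain_subset_def
proof (intro ballI)
  \<comment> \<open>The members with index n lie between E (Suc n) and E n, the others below all E n.\<close>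
  have layer_le: "E (Suc m) \<union> (E m \<inter> D) \<subseteq> E (Suc n) \<union> (E n \<inter> C)" if "n < m" for n m C D
    using decseqD[OF assms(2), of "Suc n" m] decseqD[OF assms(2), of m "Suc m"] that by auto
  have bottom_le: "(\<Inter>n. E n) \<inter> C \<subseteq> E (Suc n) \<union> (E n \<inter> D)" for n C D
    by blast
  fix X Y assume "X \<in> chain_through_decseq I E" "Y \<in> chain_through_decseq I E"
  then obtain C D where CD: "C \<subseteq> D \<or> D \<subseteq> C"
    and X: "X = (\<Inter>n. E n) \<inter> C \<or> (\<exists>n. X = E (Suc n) \<union> (E n \<inter> C))"
    and Y: "Y = (\<Inter>n. E n) \<inter> D \<or> (\<exists>m. Y = E (Suc m) \<union> (E m \<inter> D))"
    using assms(1) unfolding chain_through_decseq_def chain_subset_def by blast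
  from X Y show "X \<subseteq> Y \<or> Y \<subseteq> X"
  proof (elim disjE exE)
    assume "X = (\<Inter>n. E n) \<inter> C" "Y = (\<Inter>n. E n) \<inter> D"
    then show ?thesis using CD by blast
  next
    fix m assume "X = (\<Inter>n. E n) \<inter> C" "Y = E (Suc m) \<union> (E m \<inter> D)"
    then show ?thesis using bottom_le by blast
  next
    fix n assume "X = E (Suc n) \<union> (E n \<inter> C)" "Y = (\<Inter>n. E n) \<inter> D"
    then show ?thesis using bottom_le by blast
  next
    fix n m assume "X = E (Suc n) \<union> (E n \<inter> C)" "Y = E (Suc m) \<union> (E m \<inter> D)"
    then show ?thesis
      using layer_le[of n m D C] layer_le[of m n C D] CD by (cases n m rule: linorder_cases) auto
  qed
qed

lemma Un_decseq_layers:
  assumes "C \<subseteq> E 0"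
  shows "C = ((\<Inter>n. E n) \<inter> C) \<union> (\<Union>n. (E (Suc n) \<union> (E n \<inter> C)) - E (Suc n))"
proof (intro equalityI subsetI)
  fix x assume "x \<in> C"
  show "x \<in> ((\<Inter>n. E n) \<inter> C) \<union> (\<Union>n. (E (Suc n) \<union> (E n \<inter> C)) - E (Suc n))"
  proof (cases "x \<in> (\<Inter>n. E n)")
    case False
    then obtain k where "x \<notin> E k" by blast
    moreover have "x \<in> E 0" using \<open>x \<in> C\<close> assms by blast
    ultimately obtain n where "x \<in> E n" "x \<notin> E (Suc n)"
      by (induction k) auto
    then show ?thesis using \<open>x \<in> C\<close> by blast
  qed (use \<open>x \<in> C\<close> in blast)
qed blast

lemma
  assumes I: "I \<in> Sigma_chains M"
    and E: "\<And>n. E n \<in> sets M" "decseq E" "E 0 = space M"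
  shows Sigma_chains_chain_through_decseq: "chain_through_decseq I E \<in> Sigma_chains M"
    and chain_through_decseq_seq: "E n \<in> chain_through_decseq I E"
    and chain_through_decseq_Inter: "(\<Inter>n. E n) \<in> chain_through_decseq I E"
proof -
  note Ip = Sigma_chainsD[OF I]
  let ?K = "chain_through_decseq I E"
  have E_Suc: "E (Suc n) \<in> ?K" for n
    using Ip(3) unfolding chain_through_decseq_def by blast
  have space: "space M \<in> ?K"
    using Ip(4) decseqD[OF E(2), of 0 1] E(3) unfolding chain_through_decseq_def
    by (auto intro!: exI[of _ 0])
  then show "E n \<in> ?K"
    using E(3) E_Suc by (cases n) auto
  have "(\<Inter>n. E n) \<inter> space M \<in> ?K"
    using Ip(4) unfolding chain_through_decseq_def by blast
  moreover have "(\<Inter>n. E n) \<inter> space M = (\<Inter>n. E n)"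
    using E(3) by blast
  ultimately show "(\<Inter>n. E n) \<in> ?K"
    by simp
  have sets: "?K \<subseteq> sets M"
    unfolding chain_through_decseq_def using Ip(1) E(1) by blast
  then interpret S: sigma_algebra "space M" "sigma_sets (space M) ?K"
    by (intro sigma_algebra_sigma_sets) (auto dest: sets.sets_into_space)
  have "I \<subseteq> sigma_sets (space M) ?K"
  proof
    fix C assume "C \<in> I"
    then have members: "(\<Inter>n. E n) \<inter> C \<in> ?K" "E (Suc n) \<union> (E n \<inter> C) \<in> ?K" for n
      unfolding chain_through_decseq_def by blast+
    have "C = ((\<Inter>n. E n) \<inter> C) \<union> (\<Union>n. (E (Suc n) \<union> (E n \<inter> C)) - E (Suc n))"
      by (rule Un_decseq_layers) (use \<open>C \<in> I\<close> Ip(1) E(3) sets.sets_into_space in blast)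
    also have "\<dots> \<in> sigma_sets (space M) ?K"
      using members E_Suc by (intro S.Un S.countable_nat_UN image_subsetI S.Diff sigma_sets.Basic)
    finally show "C \<in> sigma_sets (space M) ?K" .
  qed
  moreover have "chain\<^sub>\<subseteq> ?K"
    by (rule chain_subset_chain_through_decseq[OF Ip(2) E(2)])
  moreover have "{} \<in> ?K"
    using Ip(3) unfolding chain_through_decseq_def by blast
  ultimately show "?K \<in> Sigma_chains M"
    by (intro Sigma_chainsI[OF I sets] space)
qed

lemma Sigma_chains_through_decseq:
  assumes "Sigma_chains M \<noteq> {}" "\<And>n. F n \<in> sets M" "decseq F"
  shows "\<exists>K\<in>Sigma_chains M. (\<forall>n. F n \<in> K) \<and> (\<Inter>n. F n) \<in> K"
proof -
  obtain I where I: "I \<in> Sigma_chains M" using assms(1) by blast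
  define E where "E = case_nat (space M) F"
  have E: "\<And>n. E n \<in> sets M" "decseq E" "E 0 = space M"
  proof -
    show "E n \<in> sets M" for n
      using assms(2) by (cases n) (simp_all add: E_def)
    show "decseq E"
    proof (rule decseq_SucI)
      show "E (Suc n) \<subseteq> E n" for n
        using assms(3) sets.sets_into_space[OF assms(2)] by (cases n) (auto simp: E_def decseq_Suc_iff)
    qed
  qed (simp add: E_def)
  have "(\<Inter>n. E n) = (\<Inter>n. F n)"
  proof (intro equalityI subsetI)
    fix x assume "x \<in> (\<Inter>n. E n)"
    then have "x \<in> E (Suc n)" for n by blast
    then show "x \<in> (\<Inter>n. F n)" by (simp add: E_def)
  next
    fix x assume "x \<in> (\<Inter>n. F n)"
    then show "x \<in> (\<Inter>n. E n)"
      using sets.sets_into_space[OF assms(2)[of 0]] by (auto simp: E_def split: nat.split)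
  qed
  then show ?thesis
    using Sigma_chains_chain_through_decseq[OF I E] chain_through_decseq_seq[OF I E, of "Suc _"]
      chain_through_decseq_Inter[OF I E] by (auto simp: E_def)
qed

inductive_set monotone_closure :: "'a set set \<Rightarrow> 'a set set" for A where
  basic: "a \<in> A \<Longrightarrow> a \<in> monotone_closure A"
| incseq_Union: "(\<And>i::nat. F i \<in> monotone_closure A) \<Longrightarrow> incseq F \<Longrightarrow> (\<Union>i. F i) \<in> monotone_closure A"
| decseq_Inter: "(\<And>i::nat. F i \<in> monotone_closure A) \<Longrightarrow> decseq F \<Longrightarrow> (\<Inter>i. F i) \<in> monotone_closure A"

lemma monotone_closure_subset_Pow:
  assumes "A \<subseteq> Pow \<Omega>"
  shows "monotone_closure A \<subseteq> Pow \<Omega>"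
proof
  fix x assume "x \<in> monotone_closure A"
  then show "x \<in> Pow \<Omega>"
    by induction (use assms in blast)+
qed

lemma monotone_closure_compl:
  assumes "algebra \<Omega> A" "x \<in> monotone_closure A"
  shows "\<Omega> - x \<in> monotone_closure A"
  using assms(2)
proof induction
  case (basic a)
  then show ?case by (simp add: algebra.compl_sets[OF assms(1)] monotone_closure.basic)
next
  case (incseq_Union F)
  have "decseq (\<lambda>i. \<Omega> - F i)"
    using incseq_Union.hyps(2) by (simp add: incseq_def decseq_def Diff_mono)
  have "\<Omega> - (\<Union>i. F i) = (\<Inter>i. \<Omega> - F i)" by blast
  also have "\<dots> \<in> monotone_closure A"
    by (rule monotone_closure.decseq_Inter[OF incseq_Union.IH]) fact
  finally show ?case .
next
  case (decseq_Inter F)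
  have "incseq (\<lambda>i. \<Omega> - F i)"
    using decseq_Inter.hyps(2) by (simp add: incseq_def decseq_def Diff_mono)
  have "\<Omega> - (\<Inter>i. F i) = (\<Union>i. \<Omega> - F i)" by blast
  also have "\<dots> \<in> monotone_closure A"
    by (rule monotone_closure.incseq_Union[OF decseq_Inter.IH]) fact
  finally show ?case .
qed

lemma monotone_closure_Un_extend:
  assumes "\<And>a. a \<in> A \<Longrightarrow> x \<union> a \<in> monotone_closure A" "y \<in> monotone_closure A"
  shows "x \<union> y \<in> monotone_closure A"
  using assms(2)
proof induction
  case (basic a)
  then show ?case by (rule assms(1))
next
  case (incseq_Union F)
  have "incseq (\<lambda>i. x \<union> F i)"
    using incseq_Union.hyps(2) by (simp add: incseq_def sup.coboundedI2)
  have "x \<union> (\<Union>i. F i) = (\<Union>i. x \<union> F i)" by blast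
  also have "\<dots> \<in> monotone_closure A"
    by (rule monotone_closure.incseq_Union[OF incseq_Union.IH]) fact
  finally show ?case .
next
  case (decseq_Inter F)
  have "decseq (\<lambda>i. x \<union> F i)"
    using decseq_Inter.hyps(2) by (simp add: decseq_def sup.coboundedI2)
  have "x \<union> (\<Inter>i. F i) = (\<Inter>i. x \<union> F i)" by blast
  also have "\<dots> \<in> monotone_closure A"
    by (rule monotone_closure.decseq_Inter[OF decseq_Inter.IH]) fact
  finally show ?case .
qed

lemma algebra_monotone_closure:
  assumes "algebra \<Omega> A"
  shows "algebra \<Omega> (monotone_closure A)"
proof -
  interpret algebra \<Omega> A by (fact assms)
  have Un_left: "a \<union> y \<in> monotone_closure A" if "a \<in> A" "y \<in> monotone_closure A" for a y
  proof (rule monotone_closure_Un_extend[OF _ that(2)])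
    fix b assume "b \<in> A"
    with that(1) show "a \<union> b \<in> monotone_closure A"
      by (intro monotone_closure.basic Un)
  qed
  have "x \<union> y \<in> monotone_closure A"
    if "x \<in> monotone_closure A" "y \<in> monotone_closure A" for x y
  proof (rule monotone_closure_Un_extend[OF _ that(2)])
    fix b assume "b \<in> A"
    from Un_left[OF this that(1)] show "x \<union> b \<in> monotone_closure A"
      by (simp add: Un_commute)
  qed
  moreover have "{} \<in> monotone_closure A"
    by (rule monotone_closure.basic[OF empty_sets])
  ultimately show ?thesis
    unfolding algebra_iff_Un
    using monotone_closure_subset_Pow[OF space_closed] monotone_closure_compl[OF assms] by blast
qed

lemma sigma_algebra_monotone_closure:
  assumes "algebra \<Omega> A"
  shows "sigma_algebra \<Omega> (monotone_closure A)"
proof -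
  interpret algebra \<Omega> "monotone_closure A"
    by (rule algebra_monotone_closure[OF assms])
  have "(\<Union>i. F i) \<in> monotone_closure A" if "range F \<subseteq> monotone_closure A" for F :: "nat \<Rightarrow> 'a set"
  proof -
    have "(\<Union>i\<in>{..<n}. F i) \<in> monotone_closure A" for n
      using that by (intro finite_UN) auto
    moreover have "incseq (\<lambda>n. \<Union>i\<in>{..<n}. F i)"
      by (rule incseq_SucI) (auto simp: lessThan_Suc)
    ultimately have "(\<Union>n. \<Union>i\<in>{..<n}. F i) \<in> monotone_closure A"
      by (rule monotone_closure.incseq_Union)
    then show ?thesis
      by (simp add: atLeast0LessThan[symmetric] UN_UN_finite_eq)
  qed
  then show ?thesis
    unfolding sigma_algebra_iff using algebra_axioms by blast
qed

theorem monotone_class: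
  assumes "algebra \<Omega> A" "A \<subseteq> G"
    and inc: "\<And>F. (\<And>i::nat. F i \<in> G) \<Longrightarrow> incseq F \<Longrightarrow> (\<Union>i. F i) \<in> G"
    and dec: "\<And>F. (\<And>i::nat. F i \<in> G) \<Longrightarrow> decseq F \<Longrightarrow> (\<Inter>i. F i) \<in> G"
  shows "sigma_sets \<Omega> A \<subseteq> G"
proof -
  have "sigma_sets \<Omega> A \<subseteq> monotone_closure A"
    using sigma_algebra.sigma_sets_subset[OF sigma_algebra_monotone_closure[OF assms(1)]]
    by (blast intro: monotone_closure.basic)
  also have "monotone_closure A \<subseteq> G"
  proof
    fix x assume "x \<in> monotone_closure A"
    then show "x \<in> G"
      by induction (use assms(2) inc dec in blast)+
  qed
  finally show ?thesis .
qed

lemma chain_intervals_disjoint_below: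
  assumes "chain\<^sub>\<subseteq> {c, d, c', d'}" "d \<subseteq> c" "c \<subseteq> c'"
    and "c \<inter> - d \<noteq> {}" "(c \<inter> - d) \<inter> (c' \<inter> - d') = {}"
  shows "c \<subseteq> d'"
proof (rule ccontr)
  have cmp: "c \<subseteq> d' \<or> d' \<subseteq> c" "d \<subseteq> d' \<or> d' \<subseteq> d"
    using assms(1) unfolding chain_subset_def by auto
  assume "\<not> c \<subseteq> d'"
  then obtain y where "y \<in> c" "y \<notin> d'" by blast
  then have "y \<in> d" using assms(3,5) by blast
  then have "d' \<subseteq> d" using cmp(2) \<open>y \<notin> d'\<close> by blast
  then show False using assms(3,4,5) by blast
qed

lemma chain_intervals_disjoint:
  assumes "chain\<^sub>\<subseteq> {c, d, c', d'}" "d \<subseteq> c" "d' \<subseteq> c'"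
    and "c \<inter> - d \<noteq> {}" "c' \<inter> - d' \<noteq> {}" "(c \<inter> - d) \<inter> (c' \<inter> - d') = {}"
  shows "c \<subseteq> d' \<or> c' \<subseteq> d"
proof -
  have "c \<subseteq> c' \<or> c' \<subseteq> c"
    using assms(1) unfolding chain_subset_def by auto
  moreover have "chain\<^sub>\<subseteq> {c', d', c, d}"
    using assms(1) by (simp add: insert_commute)
  ultimately show ?thesis
    using chain_intervals_disjoint_below[OF assms(1,2) _ assms(4,6)]
      chain_intervals_disjoint_below[of c' d' c d] assms(3,5,6) by (auto simp: Int_commute)
qed

lemma chain_intervals_top:
  assumes "chain\<^sub>\<subseteq> I" "finite \<C>" "\<C> \<noteq> {}" "\<C> \<subseteq> chain_intervals I" "{} \<notin> \<C>" "disjoint \<C>"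
  obtains X c d where "X \<in> \<C>" "c \<in> I" "d \<in> I" "d \<subseteq> c" "X = c \<inter> - d" "\<And>Y. Y \<in> \<C> - {X} \<Longrightarrow> Y \<subseteq> d"
proof -
  have "\<exists>X\<in>\<C>. \<exists>c\<in>I. \<exists>d\<in>I. d \<subseteq> c \<and> X = c \<inter> - d \<and> (\<forall>Y\<in>\<C> - {X}. Y \<subseteq> d)"
    using assms(2,3,4,5,6)
  proof (induction \<C> rule: finite_ne_induct)
    case (singleton X)
    then have "X \<in> chain_intervals I" by simp
    then obtain c d where "c \<in> I" "d \<in> I" "d \<subseteq> c" "X = c \<inter> - d"
      by (rule chain_intervals_cases[OF assms(1)])
    then show ?case by blast
  next
    case (insert X \<C>)
    have "disjoint \<C>"
      using insert.prems(3) by (rule pairwise_subset) blast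
    then have "\<exists>X0\<in>\<C>. \<exists>c0\<in>I. \<exists>d0\<in>I. d0 \<subseteq> c0 \<and> X0 = c0 \<inter> - d0 \<and> (\<forall>Y\<in>\<C> - {X0}. Y \<subseteq> d0)"
      using insert.prems(1,2) by (intro insert.IH) auto
    then obtain X0 c0 d0 where top: "X0 \<in> \<C>" "c0 \<in> I" "d0 \<in> I" "d0 \<subseteq> c0" "X0 = c0 \<inter> - d0"
      "\<forall>Y\<in>\<C> - {X0}. Y \<subseteq> d0"
      by blast
    have "X \<in> chain_intervals I"
      using insert.prems(1) by simp
    then obtain c d where X: "c \<in> I" "d \<in> I" "d \<subseteq> c" "X = c \<inter> - d"
      by (rule chain_intervals_cases[OF assms(1)])
    have "chain\<^sub>\<subseteq> {c, d, c0, d0}"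
      using X top by (intro chain_subset_mono[OF assms(1)]) simp
    moreover have "c \<inter> - d \<noteq> {}" "c0 \<inter> - d0 \<noteq> {}"
      using insert.prems(2) top(1,5) X(4) by auto
    moreover have "X \<inter> X0 = {}"
      by (rule disjointD[OF insert.prems(3)]) (use top(1) insert.hyps in auto)
    ultimately have "c \<subseteq> d0 \<or> c0 \<subseteq> d"
      using chain_intervals_disjoint[OF _ X(3) top(4)] X(4) top(5) by simp
    then show ?case
    proof
      assume "c \<subseteq> d0"
      then have "\<forall>Y\<in>insert X \<C> - {X0}. Y \<subseteq> d0"
        using top(6) X(4) by auto
      then show ?thesis
        using top(1-5) by blast
    next
      assume "c0 \<subseteq> d"
      then have "\<forall>Y\<in>insert X \<C> - {X}. Y \<subseteq> d"
        using top(4-6) by auto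
      then show ?thesis
        using X by blast
    qed
  qed
  then show ?thesis using that by blast
qed

lemma measure_interval_Un_le:
  assumes "submodular_sf M v" "finite_measure N" "sets N = sets M"
    and "c \<in> sets M" "d \<in> sets M" "R \<in> sets M" "R \<subseteq> d" "d \<subseteq> c"
    and "measure N c = v c" "measure N d = v d" "measure N R \<le> v R"
  shows "measure N ((c - d) \<union> R) \<le> v ((c - d) \<union> R)"
proof -
  interpret N: finite_measure N by (fact assms(2))
  have "(c - d) \<inter> R = {}"
    using assms(7) by blast
  then have "measure N ((c - d) \<union> R) = measure N (c - d) + measure N R"
    using N.finite_measure_Union[of "c - d" R] assms(3-6) by (simp add: sets.Diff)
  also have "\<dots> = v c - v d + measure N R"
    using N.finite_measure_Diff[of c d] assms(3-5,8-10) by simp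
  also have "\<dots> \<le> v c - v d + v R"
    using assms(11) by simp
  also have "\<dots> \<le> v ((c - d) \<union> R)"
  proof -
    have "(c - d) \<union> R \<in> sets M"
      using assms(4-6) by blast
    then have "v ((c - d) \<union> R \<union> d) + v (((c - d) \<union> R) \<inter> d) \<le> v ((c - d) \<union> R) + v d"
      using assms(1,5) unfolding submodular_sf_def by blast
    moreover have "(c - d) \<union> R \<union> d = c" "((c - d) \<union> R) \<inter> d = R"
      using assms(7,8) by blast+
    ultimately show ?thesis by simp
  qed
  finally show ?thesis .
qed

lemma measure_Union_chain_intervals_le:
  fixes v :: "'a set \<Rightarrow> real"
  assumes I: "chain\<^sub>\<subseteq> I" "I \<subseteq> sets M" and sub: "submodular_sf M v" and "v {} = 0"
    and N: "finite_measure N" "sets N = sets M" "\<And>C. C \<in> I \<Longrightarrow> measure N C = v C"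
    and \<C>: "finite \<C>" "\<C> \<subseteq> chain_intervals I" "disjoint \<C>"
  shows "measure N (\<Union>\<C>) \<le> v (\<Union>\<C>)"
proof -
  have bound: "measure N (\<Union>\<A>) \<le> v (\<Union>\<A>)"
    if "finite \<A>" "\<A> \<subseteq> chain_intervals I" "{} \<notin> \<A>" "disjoint \<A>" for \<A>
    using that
  proof (induction \<A> rule: finite_psubset_induct)
    case (psubset \<A>)
    show ?case
    proof (cases "\<A> = {}")
      case True
      then show ?thesis using \<open>v {} = 0\<close> by simp
    next
      case False
      obtain X c d where top: "X \<in> \<A>" "c \<in> I" "d \<in> I" "d \<subseteq> c" "X = c \<inter> - d"
        "\<And>Y. Y \<in> \<A> - {X} \<Longrightarrow> Y \<subseteq> d"
        using chain_intervals_top[OF I(1) psubset.hyps False psubset.prems] by blast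
      define R where "R = \<Union>(\<A> - {X})"
      have "R \<subseteq> d"
        using top(6) unfolding R_def by blast
      have "\<Union>\<A> = (c - d) \<union> R"
        using top(1,5) unfolding R_def by blast
      have cd: "c \<in> sets M" "d \<in> sets M"
        using top(2,3) I(2) by blast+
      have "R \<in> sets M"
        unfolding R_def using psubset.hyps psubset.prems(1) chain_intervals_subset_sets[OF I(2)]
        by (intro sets.finite_Union) auto
      have "measure N R \<le> v R"
        unfolding R_def
      proof (rule psubset.IH)
        show "\<A> - {X} \<subset> \<A>" using top(1) by blast
        show "\<A> - {X} \<subseteq> chain_intervals I" "{} \<notin> \<A> - {X}"
          using psubset.prems(1,2) by blast+
        show "disjoint (\<A> - {X})"
          using psubset.prems(3) by (rule pairwise_subset) blast
      qed
      then have "measure N ((c - d) \<union> R) \<le> v ((c - d) \<union> R)"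
        using N(3) top(2,3)
        by (intro measure_interval_Un_le[OF sub N(1,2) cd \<open>R \<in> sets M\<close> \<open>R \<subseteq> d\<close> top(4)])
      then show ?thesis
        using \<open>\<Union>\<A> = (c - d) \<union> R\<close> by simp
    qed
  qed
  have "disjoint (\<C> - {{}})"
    using \<C>(3) by (rule pairwise_subset) blast
  then have "measure N (\<Union>(\<C> - {{}})) \<le> v (\<Union>(\<C> - {{}}))"
    using \<C>(1,2) by (intro bound) auto
  moreover have "\<Union>(\<C> - {{}}) = \<Union>\<C>" by blast
  ultimately show ?thesis by simp
qed

lemma SUP_eq_maximum:
  fixes f :: "'a \<Rightarrow> 'b::complete_lattice"
  assumes "x \<in> S" "f x = c" "\<And>y. y \<in> S \<Longrightarrow> f y \<le> c"
  shows "(SUP y\<in>S. f y) = c"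
  by (rule SUP_eqI) (use assms in auto)

lemma restrict_space_in_lower_core:
  assumes "finite_measure N" "sets N = sets M" "A \<in> sets M" "measure N A = v A"
    and "\<And>B. B \<in> sets M \<Longrightarrow> B \<subseteq> A \<Longrightarrow> measure N B \<le> v B"
  shows "restrict_space N A \<in> lower_core M v A"
proof -
  have A: "A \<inter> space N \<in> sets N"
    using assms(2,3) sets.sets_into_space by (simp add: Int_absorb2)
  have "measure (restrict_space N A) B = measure N B" if "B \<subseteq> A" for B
    using measure_restrict_space[OF A that] .
  moreover have "finite_measure (restrict_space N A)"
    using finite_measure_restrict_space[OF assms(1)] assms(2,3) by simp
  moreover have "sets (restrict_space N A) = sets (restrict_space M A)"
    by (rule sets_restrict_space_cong[OF assms(2)])
  ultimately show ?thesis
    unfolding lower_core_def using assms(4,5) by simp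
qed

lemma lower_core_le: "N \<in> lower_core M v A \<Longrightarrow> B \<in> sets M \<Longrightarrow> B \<subseteq> A \<Longrightarrow> measure N B \<le> v B"
  unfolding lower_core_def by blast

lemma submodular_if_SUP_lower_core:
  assumes "\<forall>A\<in>sets M. \<forall>B\<in>sets M. B \<subseteq> A \<longrightarrow> ereal (v B) = (SUP N\<in>lower_core M v A. ereal (measure N B))"
  shows "submodular_sf M v"
  unfolding submodular_sf_def
proof (intro ballI)
  fix A B assume A: "A \<in> sets M" and B: "B \<in> sets M"
  have AB_sets: "A \<inter> B \<in> sets M" "A \<union> B \<in> sets M" "A \<inter> B \<subseteq> A \<union> B"
    using A B by auto
  have bound: "measure N (A \<inter> B) \<le> v A + v B - v (A \<union> B)" if N: "N \<in> lower_core M v (A \<union> B)" for N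
  proof -
    have N1: "finite_measure N" "sets N = sets (restrict_space M (A \<union> B))"
      "measure N (A \<union> B) = v (A \<union> B)"
      using N unfolding lower_core_def by auto
    have "A \<in> sets N" "B \<in> sets N"
      using N1(2) A B by (auto simp: sets_restrict_space_iff)
    then have "measure N (A \<union> B) = measure N A + measure N B - measure N (A \<inter> B)"
      by (simp add: measure_Un3 finite_measure.fmeasurable_eq_sets[OF N1(1)])
    moreover have "measure N A \<le> v A" "measure N B \<le> v B"
      using lower_core_le[OF N] A B by auto
    ultimately show ?thesis
      using N1(3) by simp
  qed
  have "ereal (v (A \<inter> B)) = (SUP N\<in>lower_core M v (A \<union> B). ereal (measure N (A \<inter> B)))"
    using assms AB_sets by blast
  also have "\<dots> \<le> ereal (v A + v B - v (A \<union> B))"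
    using bound by (intro SUP_least) simp
  finally show "v (A \<union> B) + v (A \<inter> B) \<le> v A + v B"
    by simp
qed

locale continuous_capacity =
  fixes M :: "'a measure" and v :: "'a set \<Rightarrow> real"
  assumes nondecreasing: "nondecreasing_sf M v"
    and continuous: "continuous_sf M v"
    and v_empty: "v {} = 0"
begin

lemma v_mono: "A \<in> sets M \<Longrightarrow> B \<in> sets M \<Longrightarrow> A \<subseteq> B \<Longrightarrow> v A \<le> v B"
  using nondecreasing unfolding nondecreasing_sf_def by blast

lemma v_nonneg: "A \<in> sets M \<Longrightarrow> 0 \<le> v A"
  using v_mono[of "{}" A] v_empty by simp

lemma mu_J_chain:
  assumes "I \<in> Sigma_chains M" "C \<in> I"
  shows "mu_J v I C = v C"
  using mu_J_interval[OF Sigma_chainsD(2)[OF assms(1)] assms(2) Sigma_chainsD(3)[OF assms(1)]] v_empty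
  by simp

lemma extremal_measure_exists:
  assumes "I \<in> Sigma_chains M"
  obtains N where "sets N = sets M" "\<And>A. A \<in> chain_algebra I \<Longrightarrow> emeasure N A = ennreal (mu_J v I A)"
proof -
  note I = Sigma_chainsD[OF assms]
  interpret semiring_of_sets "space M" "chain_intervals I"
    by (rule semiring_of_sets_Sigma_chain[OF assms])
  define f where "f A = ennreal (mu_J v I A)" for A
  have "countably_additive (chain_algebra I) f"
    using continuous assms unfolding continuous_sf_def f_def by blast
  then have "countably_additive (chain_intervals I) f"
    using chain_intervals_subset_chain_algebra[OF I(2)] unfolding countably_additive_def by blast
  moreover have "positive (chain_intervals I) f"
    using mu_J_chain[OF assms I(3)] v_empty unfolding positive_def f_def by simp
  ultimately obtain \<mu> where \<mu>: "\<And>A. A \<in> chain_intervals I \<Longrightarrow> \<mu> A = f A"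
    "measure_space (space M) (sigma_sets (space M) (chain_intervals I)) \<mu>"
    using caratheodory by metis
  define N where "N = measure_of (space M) (sets M) \<mu>"
  have sets_N: "sets N = sets M"
    unfolding N_def by simp
  have emeasure_N: "emeasure N A = \<mu> A" if "A \<in> sets M" for A
    using \<mu>(2) that unfolding N_def sigma_sets_chain_intervals[OF assms]
    by (intro emeasure_measure_of_sigma) (auto simp: measure_space_def)
  have intervals: "emeasure N (C \<inter> - D) = ennreal (v C - v D)" if "C \<in> I" "D \<in> I" "D \<subseteq> C" for C D
  proof -
    have "C \<inter> - D \<in> chain_intervals I"
      using that unfolding chain_intervals_def by (auto simp: Diff_eq[symmetric])
    then show ?thesis
      using emeasure_N chain_intervals_subset_sets[OF I(1)] \<mu>(1) mu_J_interval[OF I(2) that]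
      unfolding f_def by auto
  qed
  have "emeasure N A = ennreal (mu_J v I A)" if "A \<in> chain_algebra I" for A
  proof (rule emeasure_chain_algebra[OF I(2) _ _ intervals that])
    show "I \<subseteq> sets N" using I(1) sets_N by simp
    show "v D \<le> v C" if "C \<in> I" "D \<in> I" "D \<subseteq> C" for C D
      using that I(1) v_mono by blast
  qed
  with sets_N show ?thesis by (rule that)
qed

lemma extremal_measure_eqI:
  assumes "I \<in> Sigma_chains M" "sets N = sets M"
    and "\<And>A. A \<in> chain_algebra I \<Longrightarrow> emeasure N A = ennreal (mu_J v I A)"
  shows "extremal_measure M v I = N"
  unfolding extremal_measure_def
proof (rule the_equality)
  have chain_algebra: "C \<in> chain_algebra I" if "C \<in> I" for C
    using that Sigma_chains_subset_chain_algebra[OF assms(1)] by blast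
  show "sets N = sets M \<and> (\<forall>A\<in>chain_algebra I. emeasure N A = ennreal (mu_J v I A))"
    using assms(2,3) by blast
  fix N' assume N': "sets N' = sets M \<and> (\<forall>A\<in>chain_algebra I. emeasure N' A = ennreal (mu_J v I A))"
  show "N' = N"
  proof (rule measure_eqI_Sigma_chain[OF assms(1)])
    show "sets N' = sets M" "sets N = sets M" using N' assms(2) by auto
    show "emeasure N' C = emeasure N C" if "C \<in> I" for C
      using N' assms(3) chain_algebra[OF that] by simp
    show "emeasure N' (space M) \<noteq> \<infinity>"
      using N' chain_algebra[OF Sigma_chainsD(4)[OF assms(1)]] by simp
  qed
qed

lemma
  assumes "I \<in> Sigma_chains M"
  shows sets_extremal_measure: "sets (extremal_measure M v I) = sets M"
    and emeasure_extremal_measure: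
      "A \<in> chain_algebra I \<Longrightarrow> emeasure (extremal_measure M v I) A = ennreal (mu_J v I A)"
proof -
  obtain N where "sets N = sets M" "\<And>A. A \<in> chain_algebra I \<Longrightarrow> emeasure N A = ennreal (mu_J v I A)"
    using extremal_measure_exists[OF assms] by blast
  moreover from this have "extremal_measure M v I = N"
    by (rule extremal_measure_eqI[OF assms])
  ultimately show "sets (extremal_measure M v I) = sets M"
    "A \<in> chain_algebra I \<Longrightarrow> emeasure (extremal_measure M v I) A = ennreal (mu_J v I A)"
    by simp_all
qed

lemma space_extremal_measure: "I \<in> Sigma_chains M \<Longrightarrow> space (extremal_measure M v I) = space M"
  using sets_extremal_measure by (rule sets_eq_imp_space_eq)

lemma emeasure_extremal_measure_chain:
  assumes "I \<in> Sigma_chains M" "C \<in> I"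
  shows "emeasure (extremal_measure M v I) C = ennreal (v C)"
proof -
  have "C \<in> chain_algebra I"
    using Sigma_chains_subset_chain_algebra[OF assms(1)] assms(2) by blast
  then show ?thesis
    using emeasure_extremal_measure[OF assms(1)] mu_J_chain[OF assms] by simp
qed

lemma measure_extremal_measure_chain:
  assumes "I \<in> Sigma_chains M" "C \<in> I"
  shows "measure (extremal_measure M v I) C = v C"
  using emeasure_extremal_measure_chain[OF assms] v_nonneg[of C] Sigma_chainsD(1)[OF assms(1)] assms(2)
  by (auto simp: measure_def)

lemma finite_measure_extremal_measure: "I \<in> Sigma_chains M \<Longrightarrow> finite_measure (extremal_measure M v I)"
  by (rule finite_measureI)
    (simp add: space_extremal_measure emeasure_extremal_measure_chain Sigma_chainsD(4))

lemma Lim_decseq: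
  assumes "Sigma_chains M \<noteq> {}" "\<And>n. F n \<in> sets M" "decseq F"
  shows "(\<lambda>n. v (F n)) \<longlonglongrightarrow> v (\<Inter>n. F n)"
proof -
  obtain K where K: "K \<in> Sigma_chains M" "\<forall>n. F n \<in> K" "(\<Inter>n. F n) \<in> K"
    using Sigma_chains_through_decseq[OF assms] by blast
  interpret K: finite_measure "extremal_measure M v K"
    by (rule finite_measure_extremal_measure[OF K(1)])
  have "(\<lambda>n. measure (extremal_measure M v K) (F n)) \<longlonglongrightarrow> measure (extremal_measure M v K) (\<Inter>n. F n)"
    using assms(2,3) by (intro K.finite_Lim_measure_decseq) (auto simp: sets_extremal_measure[OF K(1)])
  then show ?thesis
    using measure_extremal_measure_chain[OF K(1)] K(2,3) by simp
qed

lemma measure_le_Union_incseq: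
  assumes "finite_measure N" "sets N = sets M" "\<And>i. F i \<in> sets M" "incseq F"
    and "\<And>i. measure N (F i) \<le> v (F i)"
  shows "measure N (\<Union>i. F i) \<le> v (\<Union>i. F i)"
proof -
  have "(\<lambda>i. measure N (F i)) \<longlonglongrightarrow> measure N (\<Union>i. F i)"
    using assms(2-4) by (intro finite_measure.finite_Lim_measure_incseq[OF assms(1)]) auto
  moreover have "measure N (F i) \<le> v (\<Union>i. F i)" for i
  proof -
    have "measure N (F i) \<le> v (F i)" by (fact assms(5))
    also have "\<dots> \<le> v (\<Union>i. F i)"
      using assms(3) by (intro v_mono) auto
    finally show ?thesis .
  qed
  ultimately show ?thesis
    by (intro LIMSEQ_le_const2) auto
qed

lemma measure_le_Inter_decseq:
  assumes "Sigma_chains M \<noteq> {}" "finite_measure N" "sets N = sets M" "\<And>i. F i \<in> sets M" "decseq F"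
    and "\<And>i. measure N (F i) \<le> v (F i)"
  shows "measure N (\<Inter>i. F i) \<le> v (\<Inter>i. F i)"
proof -
  have "(\<lambda>i. measure N (F i)) \<longlonglongrightarrow> measure N (\<Inter>i. F i)"
    using assms(3-5) by (intro finite_measure.finite_Lim_measure_decseq[OF assms(2)]) auto
  moreover have "(\<lambda>i. v (F i)) \<longlonglongrightarrow> v (\<Inter>i. F i)"
    using assms(1,4,5) by (rule Lim_decseq)
  ultimately show ?thesis
    using assms(6) by (intro LIMSEQ_le) auto
qed

lemma measure_extremal_measure_le:
  assumes "submodular_sf M v" "I \<in> Sigma_chains M" "B \<in> sets M"
  shows "measure (extremal_measure M v I) B \<le> v B"
proof -
  note I = Sigma_chainsD[OF assms(2)]
  let ?\<mu> = "extremal_measure M v I"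
  note \<mu> = finite_measure_extremal_measure[OF assms(2)] sets_extremal_measure[OF assms(2)]
  interpret semiring_of_sets "space M" "chain_intervals I"
    by (rule semiring_of_sets_Sigma_chain[OF assms(2)])
  interpret R: ring_of_sets "space M" generated_ring
    by (rule generating_ring)
  have "algebra (space M) generated_ring"
    using subset_chain_intervals[OF I(3)] I(4) by unfold_locales (blast intro: generated_ringI_Basic)
  moreover have "generated_ring \<subseteq> {X \<in> sets M. measure ?\<mu> X \<le> v X}"
  proof
    fix X assume "X \<in> generated_ring"
    then obtain \<C> where \<C>: "finite \<C>" "disjoint \<C>" "\<C> \<subseteq> chain_intervals I" "X = \<Union>\<C>"
      by (rule generated_ringE)
    have "X \<in> sets M"
      using \<C> chain_intervals_subset_sets[OF I(1)] by (auto intro!: sets.finite_Union)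
    moreover have "measure ?\<mu> X \<le> v X"
      using measure_Union_chain_intervals_le[OF I(2,1) assms(1) v_empty \<mu>
          measure_extremal_measure_chain[OF assms(2)] \<C>(1,3,2)] \<C>(4)
      by simp
    ultimately show "X \<in> {X \<in> sets M. measure ?\<mu> X \<le> v X}" by blast
  qed
  ultimately have "sigma_sets (space M) generated_ring \<subseteq> {X \<in> sets M. measure ?\<mu> X \<le> v X}"
    using measure_le_Union_incseq[OF \<mu>] measure_le_Inter_decseq[OF _ \<mu>] assms(2)
    by (intro monotone_class) auto
  moreover have "sigma_sets (space M) generated_ring = sets M"
    using sigma_sets_generated_ring_eq sigma_sets_chain_intervals[OF assms(2)] by simp
  ultimately show ?thesis
    using assms(3) by blast
qed

lemma extremal_measure_in_lower_core:
  assumes "submodular_sf M v" "I \<in> Sigma_chains M"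
  shows "extremal_measure M v I \<in> lower_core M v (space M)"
proof -
  have "sets (restrict_space M (space M)) = sets M"
    unfolding sets_restrict_space by (auto simp: image_iff sets.Int_space_eq1)
  then show ?thesis
    unfolding lower_core_def
    using finite_measure_extremal_measure[OF assms(2)] sets_extremal_measure[OF assms(2)]
      measure_extremal_measure_chain[OF assms(2) Sigma_chainsD(4)[OF assms(2)]]
      measure_extremal_measure_le[OF assms]
    by simp
qed

lemma SUP_extremal_measure_eq:
  assumes "Sigma_chains M \<noteq> {}" "\<forall>I\<in>Sigma_chains M. extremal_measure M v I \<in> lower_core M v (space M)"
    and "A \<in> sets M"
  shows "ereal (v A) = (SUP I\<in>Sigma_chains M. ereal (measure (extremal_measure M v I) A))"
proof -
  obtain K where K: "K \<in> Sigma_chains M" "A \<in> K"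
    using Sigma_chains_through_subsets[OF assms(1,3,3) order_refl] by blast
  have le: "measure (extremal_measure M v I) A \<le> v A" if "I \<in> Sigma_chains M" for I
  proof (rule lower_core_le)
    show "extremal_measure M v I \<in> lower_core M v (space M)" using assms(2) that by blast
  qed (use assms(3) sets.sets_into_space in auto)
  have "(SUP I\<in>Sigma_chains M. ereal (measure (extremal_measure M v I) A)) = ereal (v A)"
    by (rule SUP_eq_maximum[OF K(1)]) (use le measure_extremal_measure_chain[OF K] in auto)
  then show ?thesis ..
qed

lemma submodular_if_SUP_extremal_measure:
  assumes "Sigma_chains M \<noteq> {}"
    and "\<forall>A\<in>sets M. ereal (v A) = (SUP I\<in>Sigma_chains M. ereal (measure (extremal_measure M v I) A))"
  shows "submodular_sf M v"
  unfolding submodular_sf_def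
proof (intro ballI)
  fix A B assume A: "A \<in> sets M" and B: "B \<in> sets M"
  have AB: "A \<inter> B \<in> sets M" "A \<union> B \<in> sets M" "A \<inter> B \<subseteq> A \<union> B"
    using A B by auto
  obtain K where K: "K \<in> Sigma_chains M" "A \<inter> B \<in> K" "A \<union> B \<in> K"
    using Sigma_chains_through_subsets[OF assms(1) AB] by blast
  define N where "N = extremal_measure M v K"
  have le: "measure N X \<le> v X" if "X \<in> sets M" for X
  proof -
    have "ereal (measure N X) \<le> (SUP I\<in>Sigma_chains M. ereal (measure (extremal_measure M v I) X))"
      unfolding N_def using K(1) by (rule SUP_upper)
    also have "\<dots> = ereal (v X)"
      using assms(2) that by simp
    finally show ?thesis by simp
  qed
  interpret N: finite_measure N
    unfolding N_def by (rule finite_measure_extremal_measure[OF K(1)])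
  have "measure N (A \<union> B) = measure N A + measure N B - measure N (A \<inter> B)"
    using A B sets_extremal_measure[OF K(1)] unfolding N_def
    by (intro measure_Un3) (simp_all add: N.fmeasurable_eq_sets[unfolded N_def])
  moreover have "measure N (A \<union> B) = v (A \<union> B)" "measure N (A \<inter> B) = v (A \<inter> B)"
    unfolding N_def using measure_extremal_measure_chain[OF K(1)] K(2,3) by simp_all
  ultimately show "v (A \<union> B) + v (A \<inter> B) \<le> v A + v B"
    using le[OF A] le[OF B] by simp
qed

lemma SUP_lower_core_eq:
  assumes "submodular_sf M v" "Sigma_chains M \<noteq> {}" "A \<in> sets M" "B \<in> sets M" "B \<subseteq> A"
  shows "ereal (v B) = (SUP N\<in>lower_core M v A. ereal (measure N B))"
proof -
  obtain K where K: "K \<in> Sigma_chains M" "B \<in> K" "A \<in> K"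
    using Sigma_chains_through_subsets[OF assms(2,4,3,5)] by blast
  let ?N = "restrict_space (extremal_measure M v K) A"
  have N_core: "?N \<in> lower_core M v A"
  proof (rule restrict_space_in_lower_core)
    show "finite_measure (extremal_measure M v K)"
      by (rule finite_measure_extremal_measure[OF K(1)])
    show "sets (extremal_measure M v K) = sets M"
      by (rule sets_extremal_measure[OF K(1)])
    show "measure (extremal_measure M v K) A = v A"
      by (rule measure_extremal_measure_chain[OF K(1,3)])
    show "measure (extremal_measure M v K) X \<le> v X" if "X \<in> sets M" for X
      by (rule measure_extremal_measure_le[OF assms(1) K(1) that])
  qed (fact assms(3))
  have "measure ?N B = measure (extremal_measure M v K) B"
    using assms(3,5)
    by (intro measure_restrict_space) (simp_all add: sets_extremal_measure[OF K(1)]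
        space_extremal_measure[OF K(1)] sets.Int_space_eq2)
  then have N_B: "measure ?N B = v B"
    using measure_extremal_measure_chain[OF K(1,2)] by simp
  have "(SUP N\<in>lower_core M v A. ereal (measure N B)) = ereal (v B)"
  proof (rule SUP_eq_maximum[OF N_core])
    show "ereal (measure N B) \<le> ereal (v B)" if "N \<in> lower_core M v A" for N
      using lower_core_le[OF that assms(4,5)] by simp
  qed (simp add: N_B)
  then show ?thesis ..
qed

lemma submodular_iff_extremal_measures_in_lower_core:
  assumes "Sigma_chains M \<noteq> {}"
  shows "submodular_sf M v \<longleftrightarrow>
    (\<forall>I\<in>Sigma_chains M. extremal_measure M v I \<in> lower_core M v (space M))"
proof
  assume "submodular_sf M v"
  then show "\<forall>I\<in>Sigma_chains M. extremal_measure M v I \<in> lower_core M v (space M)"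
    using extremal_measure_in_lower_core by blast
next
  assume "\<forall>I\<in>Sigma_chains M. extremal_measure M v I \<in> lower_core M v (space M)"
  then have "\<forall>A\<in>sets M. ereal (v A) = (SUP I\<in>Sigma_chains M. ereal (measure (extremal_measure M v I) A))"
    using SUP_extremal_measure_eq[OF assms] by blast
  then show "submodular_sf M v"
    by (rule submodular_if_SUP_extremal_measure[OF assms])
qed

lemma submodular_iff_SUP_extremal_measure:
  assumes "Sigma_chains M \<noteq> {}"
  shows "submodular_sf M v \<longleftrightarrow>
    (\<forall>A\<in>sets M. ereal (v A) = (SUP I\<in>Sigma_chains M. ereal (measure (extremal_measure M v I) A)))"
proof
  assume "submodular_sf M v"
  then have "\<forall>I\<in>Sigma_chains M. extremal_measure M v I \<in> lower_core M v (space M)"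
    using extremal_measure_in_lower_core by blast
  then show "\<forall>A\<in>sets M. ereal (v A) = (SUP I\<in>Sigma_chains M. ereal (measure (extremal_measure M v I) A))"
    using SUP_extremal_measure_eq[OF assms] by blast
qed (rule submodular_if_SUP_extremal_measure[OF assms])

lemma submodular_iff_SUP_lower_core:
  assumes "Sigma_chains M \<noteq> {}"
  shows "submodular_sf M v \<longleftrightarrow>
    (\<forall>A\<in>sets M. \<forall>B\<in>sets M. B \<subseteq> A \<longrightarrow> ereal (v B) = (SUP N\<in>lower_core M v A. ereal (measure N B)))"
proof
  assume "submodular_sf M v"
  then show "\<forall>A\<in>sets M. \<forall>B\<in>sets M. B \<subseteq> A \<longrightarrow> ereal (v B) = (SUP N\<in>lower_core M v A. ereal (measure N B))"
    using SUP_lower_core_eq[OF _ assms] by blast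
qed (rule submodular_if_SUP_lower_core)

end

theorem theorem7:
  fixes M :: "'a measure" and v :: "'a set \<Rightarrow> real"
  assumes "Sigma_chains M \<noteq> {}"
    and "nondecreasing_sf M v"
    and "continuous_sf M v"
    and "v {} = 0"
  shows "(submodular_sf M v \<longleftrightarrow>
            (\<forall>I\<in>Sigma_chains M. extremal_measure M v I \<in> lower_core M v (space M)))
       \<and> (submodular_sf M v \<longleftrightarrow>
            (\<forall>A\<in>sets M. ereal (v A) = (SUP I\<in>Sigma_chains M. ereal (measure (extremal_measure M v I) A))))
       \<and> (submodular_sf M v \<longleftrightarrow>
            (\<forall>A\<in>sets M. \<forall>B\<in>sets M. B \<subseteq> A \<longrightarrow>
               ereal (v B) = (SUP N\<in>lower_core M v A. ereal (measure N B))))"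
proof -
  interpret continuous_capacity M v
    using assms(2-4) by unfold_locales
  show ?thesis
    using submodular_iff_extremal_measures_in_lower_core[OF assms(1)]
      submodular_iff_SUP_extremal_measure[OF assms(1)] submodular_iff_SUP_lower_core[OF assms(1)]
    by (intro conjI)
qed

end
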